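(* In the SLAR setting, let $w^*=(w_1^*,\dots,w_d^* )$ be a minimizer of the optimal adversarial training objective $$\mathbb E_{(x,y)\sim\mathcal D}\big[\max(0,1-yw^\top x+\varepsilon\|w\|_1)\big]+\frac{\lambda}{2}\|w\|_2^2$$ (equivalently of $U(\delta_w,w)$ with $\delta_w(x,y)=-y\varepsilon\operatorname{sign}(w)$). Then for every non-robust feature $x_i$, $w_i^*=0$.
   Context: SLAR setting: $(x,y)$ is drawn from a distribution $\mathcal D$ on $\mathbb R^d\times\{-1,+1\}$, $x=(x_1,\dots,x_d)$ with finite second moments, such that (A1) for each $i$ there is a constant $\mu_i$ with $\mathbb E[x_i\mid y]=y\mu_i$ for $y\in\{-1,1\}$, and (A2) the coordinates $x_1,\dots,x_d$ are mutually independent conditionally on $y$. Fix $\lambda>0$ and a perturbation budget $\varepsilon>0$. For a perturbation function $\delta$ (map with $\|\delta(x,y)\|_\infty\le\varepsilon$) and $w\in\mathbb R^d$ let $U(\delta,w)=\mathbb E_{(x,y)\sim\mathcal D}[\max(0,1-yw^\top(x+\delta(x,y)))]+\frac{\lambda}{2}\|w\|_2^2$. A feature $x_i$ is non-robust if $|\mu_i|\le\varepsilon$, and robust otherwise. $\operatorname{sign}$ is coordinatewise with $\operatorname{sign}(0)=0$. *)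

theory Defs
  imports "HOL-Probability.Probability"
begin

definition l1norm :: "real ^ 'n \<Rightarrow> real" where
  "l1norm w = (\<Sum>i\<in>UNIV. \<bar>w $ i\<bar>)"

definition adv_objective ::
  "'a measure \<Rightarrow> ('a \<Rightarrow> real ^ 'n) \<Rightarrow> ('a \<Rightarrow> real) \<Rightarrow> real \<Rightarrow> real \<Rightarrow> real ^ 'n \<Rightarrow> real" where
  "adv_objective M X Y eps lam w =
     (\<integral>\<omega>. max 0 (1 - Y \<omega> * (w \<bullet> X \<omega>) + eps * l1norm w) \<partial>M) + lam / 2 * (norm w)\<^sup>2"

definition cond_on_label :: "'a measure \<Rightarrow> ('a \<Rightarrow> real) \<Rightarrow> real \<Rightarrow> 'a measure" where
  "cond_on_label M Y y0 = uniform_measure M {\<omega>\<in>space M. Y \<omega> = y0}"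

end

theory Submission
  imports Defs
begin

text \<open>Let \<open>w\<close> be any weight vector and \<open>v\<close> the vector obtained by setting its \<open>i\<close>-th coordinate
  to zero. The adversarial hinge loss of \<open>w\<close> splits as \<open>max 0 (G + B)\<close>, where \<open>G\<close> is the
  loss of \<open>v\<close> and \<open>B = \<epsilon>\<bar>w\<^sub>i\<bar> - y w\<^sub>i x\<^sub>i\<close>; convexity of the hinge gives
  \<open>max 0 (G + B) \<ge> max 0 G + B \<one>[G > 0]\<close>. Conditionally on the label, \<open>x\<^sub>i\<close> is independent of
  \<open>G\<close>, so \<open>E[B \<one>[G > 0] | y] = (\<epsilon>\<bar>w\<^sub>i\<bar> - w\<^sub>i \<mu>\<^sub>i) P(G > 0 | y)\<close>, which is nonnegative
  when \<open>\<bar>\<mu>\<^sub>i\<bar> \<le> \<epsilon>\<close>. Hence dropping a non-robust coordinate never increases the expected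
  loss while it decreases the regulariser by \<open>\<lambda>/2 w\<^sub>i\<^sup>2\<close>, so a minimiser has \<open>w\<^sub>i = 0\<close>.\<close>

definition clear_coord :: "'n \<Rightarrow> real ^ 'n \<Rightarrow> real ^ 'n" where
  "clear_coord i w = (\<chi> j. if j = i then 0 else w $ j)"

lemma clear_coord_nth [simp]: "clear_coord i w $ j = (if j = i then 0 else w $ j)"
  by (simp add: clear_coord_def)

lemma sum_clear_coord:
  assumes "f i 0 = 0"
  shows "(\<Sum>j\<in>UNIV. f j (w $ j)) = (\<Sum>j\<in>UNIV. f j (clear_coord i w $ j)) + f i (w $ i)"
proof -
  have "(\<Sum>j\<in>UNIV. f j (clear_coord i w $ j)) = (\<Sum>j\<in>UNIV - {i}. f j (w $ j))"
    using assms by (simp add: sum.remove[of UNIV i])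
  then show ?thesis by (simp add: sum.remove[of UNIV i] add.commute)
qed

lemma inner_clear_coord: "w \<bullet> x = clear_coord i w \<bullet> x + w $ i * x $ i"
  unfolding inner_vec_def using sum_clear_coord[of "\<lambda>j t. t * x $ j" i w] by simp

lemma l1norm_clear_coord: "l1norm w = l1norm (clear_coord i w) + \<bar>w $ i\<bar>"
  unfolding l1norm_def using sum_clear_coord[of "\<lambda>j t. \<bar>t\<bar>" i w] by simp

lemma norm_clear_coord: "(norm w)\<^sup>2 = (norm (clear_coord i w))\<^sup>2 + (w $ i)\<^sup>2"
  unfolding power2_norm_eq_inner inner_vec_def
  using sum_clear_coord[of "\<lambda>j t. t * t" i w] by (simp add: power2_eq_square)

lemma integral_uniform_measure_real:
  fixes f :: "'a \<Rightarrow> real"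
  assumes "finite_measure M" "S \<in> sets M" "measure M S > 0" "integrable M f"
  shows integrable_uniform_measure_real: "integrable (uniform_measure M S) f"
    and "(\<integral>x. f x \<partial>uniform_measure M S) = (\<integral>x. f x * indicator S x \<partial>M) / measure M S"
proof -
  interpret finite_measure M by fact
  define m where "m = measure M S"
  have m: "m > 0" using assms(3) m_def by simp
  have [measurable]: "f \<in> borel_measurable M" "S \<in> sets M" using assms by auto
  have density: "uniform_measure M S = density M (\<lambda>x. ennreal (indicator S x / m))"
    unfolding uniform_measure_def emeasure_eq_measure m_def[symmetric]
    using m by (intro density_cong) (auto split: split_indicator simp: divide_ennreal[symmetric])
  have g: "(\<lambda>x. indicator S x / m) \<in> borel_measurable M" "AE x in M. 0 \<le> indicator S x / m"
    using m by (auto split: split_indicator)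
  have "integrable M (\<lambda>x. f x * indicator S x)"
    by (rule integrable_real_mult_indicator) (use assms in auto)
  then have "integrable M (\<lambda>x. indicator S x / m * f x)"
    using integrable_divide[of M _ m] by (simp add: mult_ac)
  then show "integrable (uniform_measure M S) f"
    unfolding density using integrable_real_density[OF g] by simp
  have "(\<integral>x. f x \<partial>uniform_measure M S) = (\<integral>x. indicator S x / m * f x \<partial>M)"
    unfolding density using integral_real_density[OF g] by simp
  then show "(\<integral>x. f x \<partial>uniform_measure M S) = (\<integral>x. f x * indicator S x \<partial>M) / measure M S"
    by (simp add: m_def mult_ac)
qed

lemma integral_nonneg_from_cond_on_label:
  fixes f Y :: "'a \<Rightarrow> real"
  assumes "finite_measure M" "Y \<in> borel_measurable M" "\<forall>\<omega>\<in>space M. Y \<omega> = -1 \<or> Y \<omega> = 1"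
    and "integrable M f"
    and cond: "\<And>y0. y0 \<in> {-1, 1} \<Longrightarrow> measure M {\<omega>\<in>space M. Y \<omega> = y0} > 0 \<Longrightarrow>
      0 \<le> (\<integral>\<omega>. f \<omega> \<partial>cond_on_label M Y y0)"
  shows "0 \<le> (\<integral>\<omega>. f \<omega> \<partial>M)"
proof -
  define S where "S y0 = {\<omega>\<in>space M. Y \<omega> = y0}" for y0
  have S [measurable]: "S y0 \<in> sets M" for y0
    using assms(2) unfolding S_def by measurable
  have part: "0 \<le> (\<integral>\<omega>. f \<omega> * indicator (S y0) \<omega> \<partial>M)" if "y0 \<in> {-1, 1}" for y0
  proof (cases "measure M (S y0) > 0")
    case True
    have "0 \<le> (\<integral>\<omega>. f \<omega> \<partial>cond_on_label M Y y0)"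
      using cond[OF that] True by (simp add: S_def)
    then show ?thesis
      using integral_uniform_measure_real(2)[OF assms(1) S True assms(4)] True
      by (simp add: cond_on_label_def S_def[symmetric] zero_le_divide_iff)
  next
    case False
    then have "S y0 \<in> null_sets M"
      using measure_nonneg[of M "S y0"] finite_measure.emeasure_eq_measure[OF assms(1)]
      by (auto simp: null_sets_def)
    then have "AE \<omega> in M. f \<omega> * indicator (S y0) \<omega> = 0"
      by (rule AE_mp[OF AE_not_in]) (auto intro!: AE_I2)
    then show ?thesis by (simp add: integral_eq_zero_AE)
  qed
  have "(\<integral>\<omega>. f \<omega> \<partial>M) = (\<integral>\<omega>. f \<omega> * indicator (S (-1)) \<omega> + f \<omega> * indicator (S 1) \<omega> \<partial>M)"
    using assms(3) by (intro Bochner_Integration.integral_cong) (auto simp: S_def split: split_indicator)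
  also have "\<dots> = (\<integral>\<omega>. f \<omega> * indicator (S (-1)) \<omega> \<partial>M) + (\<integral>\<omega>. f \<omega> * indicator (S 1) \<omega> \<partial>M)"
    using assms(4) by (intro Bochner_Integration.integral_add integrable_real_mult_indicator S)
  finally show ?thesis using part[of "-1"] part[of 1] by simp
qed

lemma (in prob_space) indep_var_integral_mult_indicator_nonneg:
  fixes U V :: "'a \<Rightarrow> real"
  assumes "indep_var borel U borel V" "integrable M U" "0 \<le> expectation U" "A \<in> sets borel"
  shows "0 \<le> (\<integral>\<omega>. U \<omega> * indicator A (V \<omega>) \<partial>M)"
proof -
  have [measurable]: "V \<in> borel_measurable M" "A \<in> sets borel"
    using indep_var_rv2[OF assms(1)] assms(4) by auto
  have indep: "indep_var borel U borel (\<lambda>\<omega>. indicator A (V \<omega>) :: real)"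
    using indep_var_compose[OF assms(1), of id borel "indicator A"] by (simp add: o_def)
  have "integrable M (\<lambda>\<omega>. indicator A (V \<omega>) :: real)"
    by (rule integrable_const_bound[where B=1]) (auto split: split_indicator)
  then have "(\<integral>\<omega>. U \<omega> * indicator A (V \<omega>) \<partial>M) = expectation U * expectation (\<lambda>\<omega>. indicator A (V \<omega>))"
    by (rule indep_var_lebesgue_integral[OF indep assms(2)])
  then show ?thesis using assms(3) by simp
qed

lemma (in prob_space) indep_var_coord_inner:
  fixes X :: "'a \<Rightarrow> real ^ 'n"
  assumes "indep_vars (\<lambda>_. borel) (\<lambda>j \<omega>. X \<omega> $ j) UNIV" and "v $ i = 0"
  shows "indep_var borel (\<lambda>\<omega>. X \<omega> $ i) borel (\<lambda>\<omega>. v \<bullet> X \<omega>)"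
proof -
  have UNIV_eq: "insert i (UNIV - {i}) = UNIV" by auto
  have "indep_vars (\<lambda>_. borel) (\<lambda>j \<omega>. if j = i then X \<omega> $ j else v $ j * X \<omega> $ j)
      (insert i (UNIV - {i}))"
    unfolding UNIV_eq
    by (rule indep_vars_compose2[where Y="\<lambda>j t. if j = i then t else v $ j * t", OF assms(1)]) auto
  from indep_vars_sum[OF _ _ this]
  have "indep_var borel (\<lambda>\<omega>. X \<omega> $ i) borel (\<lambda>\<omega>. \<Sum>j\<in>UNIV - {i}. v $ j * X \<omega> $ j)"
    by simp
  moreover have "(\<Sum>j\<in>UNIV - {i}. v $ j * x $ j) = v \<bullet> x" for x :: "real ^ 'n"
    using assms(2) by (simp add: inner_vec_def sum.remove[of UNIV i])
  ultimately show ?thesis by simp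
qed

locale slar = prob_space M for M :: "'a measure" +
  fixes X :: "'a \<Rightarrow> real ^ 'n" and Y :: "'a \<Rightarrow> real" and \<mu> :: "'n \<Rightarrow> real"
  assumes X_measurable [measurable]: "X \<in> borel_measurable M"
    and Y_measurable [measurable]: "Y \<in> borel_measurable M"
    and label: "\<forall>\<omega>\<in>space M. Y \<omega> = -1 \<or> Y \<omega> = 1"
    and square_integrable: "\<forall>i. integrable M (\<lambda>\<omega>. (X \<omega> $ i)\<^sup>2)"
    and cond_mean: "\<forall>y0\<in>{-1, 1}. measure M {\<omega>\<in>space M. Y \<omega> = y0} > 0 \<longrightarrow>
      (\<forall>i. prob_space.expectation (cond_on_label M Y y0) (\<lambda>\<omega>. X \<omega> $ i) = y0 * \<mu> i)"
    and cond_indep: "\<forall>y0\<in>{-1, 1}. measure M {\<omega>\<in>space M. Y \<omega> = y0} > 0 \<longrightarrow>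
      prob_space.indep_vars (cond_on_label M Y y0) (\<lambda>_. borel) (\<lambda>i \<omega>. X \<omega> $ i) UNIV"
begin

lemma coord_measurable [measurable]: "(\<lambda>\<omega>. X \<omega> $ j) \<in> borel_measurable M"
  by (rule measurable_compose[OF X_measurable borel_measurable_nth])

lemma integrable_coord: "integrable M (\<lambda>\<omega>. X \<omega> $ j)"
  by (rule square_integrable_imp_integrable[OF _ square_integrable[rule_format]]) simp

lemma integrable_label_mult:
  assumes "integrable M f"
  shows "integrable M (\<lambda>\<omega>. Y \<omega> * f \<omega>)"
proof (rule Bochner_Integration.integrable_bound[OF assms _ AE_I2])
  show "(\<lambda>\<omega>. Y \<omega> * f \<omega>) \<in> borel_measurable M"
    using borel_measurable_integrable[OF assms] by simp
  show "norm (Y \<omega> * f \<omega>) \<le> norm (f \<omega>)" if "\<omega> \<in> space M" for \<omega>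
  proof -
    from label that have "Y \<omega> = -1 \<or> Y \<omega> = 1" by blast
    then show ?thesis by (auto simp: abs_mult)
  qed
qed

lemma integrable_label_inner: "integrable M (\<lambda>\<omega>. Y \<omega> * (v \<bullet> X \<omega>))"
  unfolding inner_vec_def inner_real_def
  by (intro integrable_label_mult Bochner_Integration.integrable_sum
      Bochner_Integration.integrable_mult_right integrable_coord)

lemma integrable_hinge: "integrable M (\<lambda>\<omega>. max 0 (c - Y \<omega> * (v \<bullet> X \<omega>)))"
  by (rule Bochner_Integration.integrable_bound[where f="\<lambda>\<omega>. c - Y \<omega> * (v \<bullet> X \<omega>)"])
    (use integrable_label_inner in auto)

lemma integrable_feature_term:
  "integrable M (\<lambda>\<omega>. (e - Y \<omega> * (a * X \<omega> $ i)) * indicator {0<..} (c - Y \<omega> * (v \<bullet> X \<omega>)))"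
proof (rule Bochner_Integration.integrable_bound[where f="\<lambda>\<omega>. e - Y \<omega> * (a * X \<omega> $ i)"])
  show "integrable M (\<lambda>\<omega>. e - Y \<omega> * (a * X \<omega> $ i))"
    by (intro Bochner_Integration.integrable_diff integrable_label_mult
        Bochner_Integration.integrable_mult_right integrable_coord) simp
qed (auto split: split_indicator)

lemma prob_space_cond_on_label:
  assumes "measure M {\<omega>\<in>space M. Y \<omega> = y0} > 0"
  shows "prob_space (cond_on_label M Y y0)"
  unfolding cond_on_label_def using assms
  by (intro prob_space_uniform_measure) (auto simp: emeasure_eq_measure)

lemma integral_feature_term_nonneg:
  assumes "\<bar>\<mu> i\<bar> \<le> eps" and "v $ i = 0"
  shows "0 \<le> (\<integral>\<omega>. (eps * \<bar>a\<bar> - Y \<omega> * (a * X \<omega> $ i)) *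
    indicator {0<..} (c - Y \<omega> * (v \<bullet> X \<omega>)) \<partial>M)"
proof (rule integral_nonneg_from_cond_on_label
    [OF finite_measure_axioms Y_measurable label integrable_feature_term])
  fix y0 :: real
  assume y0: "y0 \<in> {-1, 1}" and pos: "measure M {\<omega>\<in>space M. Y \<omega> = y0} > 0"
  define N where "N = cond_on_label M Y y0"
  interpret N: prob_space N
    unfolding N_def by (rule prob_space_cond_on_label[OF pos])
  have S [measurable]: "{\<omega>\<in>space M. Y \<omega> = y0} \<in> sets M" by measurable
  have sets_N [measurable_cong]: "sets N = sets M"
    by (simp add: N_def cond_on_label_def)
  define U where "U \<omega> = eps * \<bar>a\<bar> - y0 * (a * X \<omega> $ i)" for \<omega>
  have "N.indep_vars (\<lambda>_. borel) (\<lambda>j \<omega>. X \<omega> $ j) UNIV"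
    using cond_indep y0 pos unfolding N_def by blast
  from N.indep_var_compose[OF N.indep_var_coord_inner[OF this assms(2)],
      of "\<lambda>x. eps * \<bar>a\<bar> - y0 * (a * x)" borel id borel]
  have indep: "N.indep_var borel U borel (\<lambda>\<omega>. v \<bullet> X \<omega>)"
    by (simp add: U_def[abs_def] o_def)
  have int_coord: "integrable N (\<lambda>\<omega>. X \<omega> $ i)"
    unfolding N_def cond_on_label_def
    by (rule integrable_uniform_measure_real[OF finite_measure_axioms S pos integrable_coord])
  then have int_U: "integrable N U"
    unfolding U_def by simp
  have "N.expectation (\<lambda>\<omega>. X \<omega> $ i) = y0 * \<mu> i"
    using cond_mean y0 pos unfolding N_def by blast
  then have "N.expectation U = eps * \<bar>a\<bar> - y0 * (a * (y0 * \<mu> i))"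
    unfolding U_def using int_coord by (simp add: N.prob_space)
  also have "\<dots> = eps * \<bar>a\<bar> - a * \<mu> i"
    using y0 by auto
  also have "\<dots> \<ge> 0"
    using assms(1) abs_ge_self[of "a * \<mu> i"] mult_left_mono[OF assms(1) abs_ge_zero[of a]]
    by (simp add: abs_mult mult.commute)
  finally have "0 \<le> (\<integral>\<omega>. U \<omega> * indicator {t. 0 < c - y0 * t} (v \<bullet> X \<omega>) \<partial>N)"
    by (intro N.indep_var_integral_mult_indicator_nonneg[OF indep int_U]) measurable
  also have "(\<integral>\<omega>. U \<omega> * indicator {t. 0 < c - y0 * t} (v \<bullet> X \<omega>) \<partial>N) =
      (\<integral>\<omega>. (eps * \<bar>a\<bar> - Y \<omega> * (a * X \<omega> $ i)) * indicator {0<..} (c - Y \<omega> * (v \<bullet> X \<omega>)) \<partial>N)"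
  proof (rule integral_cong_AE)
    show "AE \<omega> in N. U \<omega> * indicator {t. 0 < c - y0 * t} (v \<bullet> X \<omega>) =
        (eps * \<bar>a\<bar> - Y \<omega> * (a * X \<omega> $ i)) * indicator {0<..} (c - Y \<omega> * (v \<bullet> X \<omega>))"
      unfolding N_def cond_on_label_def
      by (rule AE_uniform_measureI[OF S AE_I2]) (auto simp: U_def split: split_indicator)
  qed (simp_all add: U_def)
  finally show "0 \<le> (\<integral>\<omega>. (eps * \<bar>a\<bar> - Y \<omega> * (a * X \<omega> $ i)) * indicator {0<..} (c - Y \<omega> * (v \<bullet> X \<omega>))
      \<partial>cond_on_label M Y y0)"
    unfolding N_def .
qed

lemma adv_objective_clear_coord_le:
  assumes "\<bar>\<mu> i\<bar> \<le> eps"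
  shows "adv_objective M X Y eps lam (clear_coord i w) + lam / 2 * (w $ i)\<^sup>2
    \<le> adv_objective M X Y eps lam w"
proof -
  define v where "v = clear_coord i w"
  define c where "c = 1 + eps * l1norm v"
  define G where "G \<omega> = c - Y \<omega> * (v \<bullet> X \<omega>)" for \<omega>
  define B where "B \<omega> = eps * \<bar>w $ i\<bar> - Y \<omega> * (w $ i * X \<omega> $ i)" for \<omega>
  have split: "1 - Y \<omega> * (w \<bullet> X \<omega>) + eps * l1norm w = G \<omega> + B \<omega>" for \<omega>
    unfolding G_def B_def c_def v_def inner_clear_coord[of w _ i] l1norm_clear_coord[of w i]
    by (simp add: algebra_simps)
  have subgradient: "max 0 (G \<omega>) + B \<omega> * indicator {0<..} (G \<omega>) \<le> max 0 (G \<omega> + B \<omega>)" for \<omega>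
    by (simp split: split_indicator)
  have int_G: "integrable M (\<lambda>\<omega>. max 0 (G \<omega>))"
    unfolding G_def by (rule integrable_hinge)
  have "(\<lambda>\<omega>. max 0 (G \<omega> + B \<omega>)) = (\<lambda>\<omega>. max 0 (1 + eps * l1norm w - Y \<omega> * (w \<bullet> X \<omega>)))"
    unfolding split[symmetric] by (simp add: algebra_simps)
  then have int_GB: "integrable M (\<lambda>\<omega>. max 0 (G \<omega> + B \<omega>))"
    using integrable_hinge by metis
  have int_B: "integrable M (\<lambda>\<omega>. B \<omega> * indicator {0<..} (G \<omega>))"
    unfolding B_def G_def by (rule integrable_feature_term)
  have "0 \<le> (\<integral>\<omega>. B \<omega> * indicator {0<..} (G \<omega>) \<partial>M)"
    unfolding B_def G_def using assms by (intro integral_feature_term_nonneg) (simp_all add: v_def)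
  then have "(\<integral>\<omega>. max 0 (G \<omega>) \<partial>M) \<le> (\<integral>\<omega>. max 0 (G \<omega>) + B \<omega> * indicator {0<..} (G \<omega>) \<partial>M)"
    using int_G int_B by simp
  also have "\<dots> \<le> (\<integral>\<omega>. max 0 (G \<omega> + B \<omega>) \<partial>M)"
    using int_G int_B int_GB subgradient by (intro integral_mono) auto
  finally show ?thesis
    unfolding adv_objective_def norm_clear_coord[of w i] split
    by (simp add: G_def c_def v_def algebra_simps)
qed

end

theorem mainTheorem16:
  fixes M :: "'a measure" and X :: "'a \<Rightarrow> real ^ 'n" and Y :: "'a \<Rightarrow> real"
    and \<mu> :: "'n \<Rightarrow> real" and lam eps :: real and wstar :: "real ^ 'n"
  assumes "prob_space M"
    and "X \<in> borel_measurable M" and "Y \<in> borel_measurable M"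
    and "\<forall>\<omega>\<in>space M. Y \<omega> = -1 \<or> Y \<omega> = 1"
    and "\<forall>i. integrable M (\<lambda>\<omega>. (X \<omega> $ i)\<^sup>2)"
    and A1: "\<forall>y0\<in>{-1, 1}. measure M {\<omega>\<in>space M. Y \<omega> = y0} > 0 \<longrightarrow>
              (\<forall>i. prob_space.expectation (cond_on_label M Y y0) (\<lambda>\<omega>. X \<omega> $ i) = y0 * \<mu> i)"
    and A2: "\<forall>y0\<in>{-1, 1}. measure M {\<omega>\<in>space M. Y \<omega> = y0} > 0 \<longrightarrow>
              prob_space.indep_vars (cond_on_label M Y y0) (\<lambda>_. borel) (\<lambda>i \<omega>. X \<omega> $ i) UNIV"
    and "lam > 0" and "eps > 0"
    and minimizer: "\<forall>w. adv_objective M X Y eps lam wstar \<le> adv_objective M X Y eps lam w"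
  shows "\<forall>i. \<bar>\<mu> i\<bar> \<le> eps \<longrightarrow> wstar $ i = 0"
proof (intro allI impI)
  fix i assume non_robust: "\<bar>\<mu> i\<bar> \<le> eps"
  interpret slar M X Y \<mu>
    using assms(1-7) by (simp add: slar_def slar_axioms_def)
  have "lam / 2 * (wstar $ i)\<^sup>2 \<le> 0"
    using adv_objective_clear_coord_le[OF non_robust, of lam wstar]
      minimizer[rule_format, of "clear_coord i wstar"]
    by linarith
  then show "wstar $ i = 0"
    using \<open>lam > 0\<close> by (simp add: mult_le_0_iff)
qed

end
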